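(* Let $\varphi:\mathbb{R}^n\to[0,\infty]$ be a geometric convex function. Then for all $s,t>0$, \[ \left(\underline{K}_{1/s}(\varphi)\right)^{\circ}\subseteq\underline{K}_{s}(\varphi^{\circ})\subseteq(st+1)\left(\underline{K}_{t}(\varphi)\right)^{\circ}. \]
   Context: A geometric convex function is a lower semi-continuous convex function $\varphi:\mathbb{R}^n\to[0,\infty]$ with $\varphi(0)=0$. The polarity transform is $\varphi^{\circ}(x)=\sup_{y\in\mathbb{R}^n}\frac{\langle x,y\rangle-1}{\varphi(y)}$, with conventions $\frac{+}{0}=\infty$, $\frac{0}{0}=0$, $\frac{-}{0}=0$. For $t\ge0$, $\underline{K}_t(\varphi)=\{x\in\mathbb{R}^n:\varphi(x)\le t\}$. For a set $A\subseteq\mathbb{R}^n$, $A^{\circ}=\{x:\sup_{y\in A}\langle x,y\rangle\le1\}$. *)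

theory Defs
  imports "HOL-Analysis.Analysis" "HOL-Library.Extended_Real"
begin

text \<open>Functions R^n -> [0,infinity] are modelled as maps into ereal that are nonnegative.\<close>

definition lsc_fun :: "('a::topological_space \<Rightarrow> ereal) \<Rightarrow> bool" where
  "lsc_fun f \<longleftrightarrow> (\<forall>x. f x \<le> Liminf (at x) f)"

definition convex_efun :: "('a::real_vector \<Rightarrow> ereal) \<Rightarrow> bool" where
  "convex_efun f \<longleftrightarrow> (\<forall>x y (l::real). 0 \<le> l \<and> l \<le> 1 \<longrightarrow>
      f ((1 - l) *\<^sub>R x + l *\<^sub>R y) \<le> ereal (1 - l) * f x + ereal l * f y)"

definition geometric_convex :: "('a::euclidean_space \<Rightarrow> ereal) \<Rightarrow> bool" where
  "geometric_convex f \<longleftrightarrow> (\<forall>x. 0 \<le> f x) \<and> lsc_fun f \<and> convex_efun f \<and> f 0 = 0"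

text \<open>Quotient a / b for a real, b in [0,infinity], with conventions
  (+)/0 = infinity, 0/0 = 0, (-)/0 = 0, and a/infinity = 0.\<close>
definition pquot :: "real \<Rightarrow> ereal \<Rightarrow> ereal" where
  "pquot a b = (if b = 0 then (if a > 0 then \<infinity> else 0)
                else if b = \<infinity> then 0 else ereal (a / real_of_ereal b))"

definition polarity :: "('a::euclidean_space \<Rightarrow> ereal) \<Rightarrow> 'a \<Rightarrow> ereal" where
  "polarity f x = (SUP y. pquot (inner x y - 1) (f y))"

definition sublevel :: "('a \<Rightarrow> ereal) \<Rightarrow> real \<Rightarrow> 'a set" where
  "sublevel f t = {x. f x \<le> ereal t}"

definition polar_set :: "'a::real_inner set \<Rightarrow> 'a set" where
  "polar_set A = {x. \<forall>y\<in>A. inner x y \<le> 1}"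

end

theory Submission
  imports Defs
begin

text \<open>Both inclusions reduce to the pointwise characterisation
  \<open>\<phi>\<degree>(x) \<le> s \<longleftrightarrow> \<langle>x,y\<rangle> - 1 \<le> s \<phi>(y) for all y\<close>.
  For the first one, a point y with \<open>\<phi>(y) = c > 1/s\<close> is shrunk to \<open>y/(sc)\<close>, which by
  convexity and \<open>\<phi>(0) = 0\<close> lies in \<open>K\<^sub>1\<^sub>/\<^sub>s(\<phi>)\<close>, so that \<open>\<langle>x,y\<rangle> \<le> sc\<close>.
  For the second one, \<open>\<phi>(y) \<le> t\<close> gives \<open>\<langle>x,y\<rangle> \<le> st + 1\<close> directly.\<close>

text \<open>The hypothesis \<open>0 < s\<close> is needed because \<open>0 * \<infinity> = 0\<close> in \<^typ>\<open>ereal\<close>.\<close>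

lemma pquot_le_ereal_iff:
  assumes "0 < s" and "0 \<le> b"
  shows "pquot a b \<le> ereal s \<longleftrightarrow> ereal a \<le> ereal s * b"
proof (cases b)
  case (real c)
  with assms show ?thesis
    by (cases "c = 0") (auto simp: pquot_def divide_le_eq mult.commute)
qed (use assms in \<open>auto simp: pquot_def\<close>)

lemma polarity_le_ereal_iff:
  fixes \<phi> :: "'a::euclidean_space \<Rightarrow> ereal"
  assumes "0 < s" and "\<And>y. 0 \<le> \<phi> y"
  shows "polarity \<phi> x \<le> ereal s \<longleftrightarrow> (\<forall>y. ereal (inner x y - 1) \<le> ereal s * \<phi> y)"
  unfolding polarity_def SUP_le_iff using pquot_le_ereal_iff[OF assms(1) assms(2)] by simp

lemma convex_efun_scale_le:
  assumes "convex_efun f" and "f 0 = 0" and "0 \<le> l" and "l \<le> 1"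
  shows "f (l *\<^sub>R y) \<le> ereal l * f y"
  using assms(1)[unfolded convex_efun_def, rule_format, of l 0 y] assms(2-4) by simp

lemma inner_le_polar_set_sublevel:
  fixes \<phi> :: "'a::real_inner \<Rightarrow> ereal"
  assumes "convex_efun \<phi>" and "\<phi> 0 = 0" and "0 < r"
    and "x \<in> polar_set (sublevel \<phi> r)" and "\<phi> y = ereal c"
  shows "inner x y \<le> max 1 (c / r)"
proof (cases "c \<le> r")
  case True
  with assms(4,5) have "inner x y \<le> 1" by (simp add: polar_set_def sublevel_def)
  then show ?thesis by simp
next
  case False
  define l where "l = r / c"
  have l: "0 \<le> l" "l \<le> 1" "l * c = r"
    using False assms(3) by (auto simp: l_def)
  have "\<phi> (l *\<^sub>R y) \<le> ereal r"
    using convex_efun_scale_le[OF assms(1,2) l(1,2), of y] assms(5) l(3) by simp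
  then have "l * inner x y \<le> 1"
    using assms(4) by (auto simp: polar_set_def sublevel_def)
  then have "inner x y \<le> c / r"
    using False assms(3) by (simp add: l_def field_simps)
  then show ?thesis by simp
qed

lemma mem_scaleR_polar_set:
  fixes x :: "'a::real_inner"
  assumes "0 < c" and "\<And>y. y \<in> A \<Longrightarrow> inner x y \<le> c"
  shows "x \<in> (\<lambda>z. c *\<^sub>R z) ` polar_set A"
proof
  show "x = c *\<^sub>R (inverse c *\<^sub>R x)" using assms(1) by simp
  show "inverse c *\<^sub>R x \<in> polar_set A"
    using assms by (auto simp: polar_set_def field_simps)
qed

theorem proposition2:
  fixes \<phi> :: "'a::euclidean_space \<Rightarrow> ereal" and s t :: real
  assumes "geometric_convex \<phi>" and "s > 0" and "t > 0"
  shows "polar_set (sublevel \<phi> (1 / s)) \<subseteq> sublevel (polarity \<phi>) s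
         \<and> sublevel (polarity \<phi>) s \<subseteq> (\<lambda>x. (s * t + 1) *\<^sub>R x) ` polar_set (sublevel \<phi> t)"
proof
  have nonneg: "\<And>y. 0 \<le> \<phi> y" and convex: "convex_efun \<phi>" and zero: "\<phi> 0 = 0"
    using assms(1) unfolding geometric_convex_def by auto
  note polarity_le = polarity_le_ereal_iff[OF assms(2) nonneg]
  show "polar_set (sublevel \<phi> (1 / s)) \<subseteq> sublevel (polarity \<phi>) s"
  proof
    fix x assume x: "x \<in> polar_set (sublevel \<phi> (1 / s))"
    have "ereal (inner x y - 1) \<le> ereal s * \<phi> y" for y
    proof (cases "\<phi> y")
      case (real c)
      have "inner x y \<le> max 1 (s * c)"
        using inner_le_polar_set_sublevel[OF convex zero _ x real] assms(2) by (simp add: mult.commute)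
      moreover have "0 \<le> s * c" using real nonneg[of y] assms(2) by simp
      ultimately show ?thesis using real by simp
    qed (use nonneg[of y] assms(2) in auto)
    then show "x \<in> sublevel (polarity \<phi>) s" by (simp add: sublevel_def polarity_le)
  qed
  show "sublevel (polarity \<phi>) s \<subseteq> (\<lambda>x. (s * t + 1) *\<^sub>R x) ` polar_set (sublevel \<phi> t)"
  proof
    fix x assume "x \<in> sublevel (polarity \<phi>) s"
    then have x: "\<And>y. ereal (inner x y - 1) \<le> ereal s * \<phi> y"
      by (simp add: sublevel_def polarity_le)
    have "inner x y \<le> s * t + 1" if "\<phi> y \<le> ereal t" for y
    proof -
      have "ereal s * \<phi> y \<le> ereal (s * t)"
        using ereal_mult_left_mono[OF that, of "ereal s"] assms(2) by simp
      then have "ereal (inner x y - 1) \<le> ereal (s * t)" using x[of y] by (rule order_trans[rotated])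
      then show ?thesis by simp
    qed
    then show "x \<in> (\<lambda>x. (s * t + 1) *\<^sub>R x) ` polar_set (sublevel \<phi> t)"
      using assms(2,3) by (intro mem_scaleR_polar_set) (auto simp: sublevel_def add_pos_pos)
  qed
qed

end
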